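(* Let $N\in\{2,3,\dots\}$ and $C\ge1$. There is $D=D(N,C)>0$ such that every geodesic metric tree $T$ with $\mathrm{val}(T)\le N$ and uniform branch separation with constant $C$ is $D$-doubling.
   Context: A metric tree is a compact connected locally connected metric space with at least two points where any two points are joined by a unique arc. Branches of $T$ at $p$: components of $T\setminus\{p\}$; $\mathrm{val}(p,T)$ their number, $\mathrm{val}(T)=\sup_p\mathrm{val}(p,T)$; branch points have valence $\ge3$. Label branches $B^1_T(p),B^2_T(p),\dots$ with non-increasing diameters, $H_T(p)=\mathrm{diam}B^3_T(p)$. Uniform branch separation with constant $C$: $d(p,q)\ge C^{-1}\min\{H_T(p),H_T(q)\}$ for all distinct branch points $p,q$. Geodesic: any two points $x,y$ joined by a curve isometric to an interval of length $d(x,y)$. $D$-doubling: every ball can be covered by at most $D$ balls of half its radius. *)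

theory Defs
  imports "HOL-Analysis.Analysis" "HOL-Library.Multiset"
begin

definition arc_in :: "'a topology \<Rightarrow> (real \<Rightarrow> 'a) \<Rightarrow> bool" where
  "arc_in X g \<longleftrightarrow> pathin X g \<and> inj_on g {0..1}"

definition metric_tree :: "'a metric \<Rightarrow> bool" where
  "metric_tree m \<longleftrightarrow>
     compact_space (mtopology_of m) \<and> connected_space (mtopology_of m) \<and>
     locally_connected_space (mtopology_of m) \<and>
     (\<exists>x\<in>mspace m. \<exists>y\<in>mspace m. x \<noteq> y) \<and>
     (\<forall>x\<in>mspace m. \<forall>y\<in>mspace m. x \<noteq> y \<longrightarrow>
        (\<exists>!A. \<exists>g. arc_in (mtopology_of m) g \<and> g 0 = x \<and> g 1 = y \<and> A = g ` {0..1}))"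

definition branches :: "'a metric \<Rightarrow> 'a \<Rightarrow> 'a set set" where
  "branches m p = connected_components_of (subtopology (mtopology_of m) (mspace m - {p}))"

definition mdiam :: "'a metric \<Rightarrow> 'a set \<Rightarrow> real" where
  "mdiam m S = Sup {mdist m x y | x y. x \<in> S \<and> y \<in> S}"

definition valence_le :: "'a metric \<Rightarrow> nat \<Rightarrow> bool" where
  "valence_le m N \<longleftrightarrow> (\<forall>p\<in>mspace m. finite (branches m p) \<and> card (branches m p) \<le> N)"

definition branch_point :: "'a metric \<Rightarrow> 'a \<Rightarrow> bool" where
  "branch_point m p \<longleftrightarrow> p \<in> mspace m \<and> (infinite (branches m p) \<or> card (branches m p) \<ge> 3)"

text \<open>H_T(p): diameter of the third branch when the (finitely many) branches are
  listed with non-increasing diameters (ties counted with multiplicity).\<close>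
definition Hbr :: "'a metric \<Rightarrow> 'a \<Rightarrow> real" where
  "Hbr m p = rev (sorted_list_of_multiset (image_mset (mdiam m) (mset_set (branches m p)))) ! 2"

definition uniform_branch_separation :: "'a metric \<Rightarrow> real \<Rightarrow> bool" where
  "uniform_branch_separation m C \<longleftrightarrow>
     (\<forall>p q. branch_point m p \<and> branch_point m q \<and> p \<noteq> q \<longrightarrow>
        mdist m p q \<ge> min (Hbr m p) (Hbr m q) / C)"

definition geodesic_space :: "'a metric \<Rightarrow> bool" where
  "geodesic_space m \<longleftrightarrow>
     (\<forall>x\<in>mspace m. \<forall>y\<in>mspace m. \<exists>\<gamma>::real \<Rightarrow> 'a.
        \<gamma> ` {0..mdist m x y} \<subseteq> mspace m \<and> \<gamma> 0 = x \<and> \<gamma> (mdist m x y) = y \<and>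
        (\<forall>s\<in>{0..mdist m x y}. \<forall>t\<in>{0..mdist m x y}. mdist m (\<gamma> s) (\<gamma> t) = \<bar>s - t\<bar>))"

definition doubling :: "'a metric \<Rightarrow> real \<Rightarrow> bool" where
  "doubling m D \<longleftrightarrow>
     (\<forall>x\<in>mspace m. \<forall>r>0. \<exists>F. finite F \<and> F \<subseteq> mspace m \<and> real (card F) \<le> D \<and>
        mball_of m x r \<subseteq> (\<Union>c\<in>F. mball_of m c (r / 2)))"

end

theory Submission
  imports Defs
begin

text \<open>Put \<open>\<rho> = r/4\<close>. A point at distance at least \<open>2\<rho>\<close> from \<open>x\<close> in the ball \<open>B(x,4\<rho>)\<close> lies within
  \<open>2\<rho>\<close> of the point at depth \<open>\<rho>\<close> or \<open>2\<rho>\<close> on its geodesic from \<open>x\<close>, so it suffices to bound the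
  number of points \<open>p\<close> with \<open>d(x,p) = s \<le> 2\<rho>\<close> that lie on a geodesic from \<open>x\<close> reaching depth \<open>s + \<rho>\<close>.
  The geodesics from \<open>x\<close> to a finite set \<open>F\<close> of such points stay together up to depth
  \<open>\<tau>(F) < s\<close>, the least Gromov product \<open>(p|q)\<^sub>x\<close>; the branches at the split point \<open>c(F)\<close> partition
  \<open>F\<close> into at most \<open>N\<close> fibers, and each fiber splits strictly deeper. The split point of a fiber
  is a branch point whose three largest branches have diameter at least \<open>\<rho>\<close>: two of them
  contain the extensions of points of the fiber, the third one those of the other fibers. By
  uniform branch separation the depth therefore grows by at least \<open>\<rho>/C\<close> from one fiber to a
  fiber inside it, so fibers nest at most \<open>2C + 1\<close> times and \<open>|F| \<le> N\<^bsup>2C+1\<^esup>\<close>.\<close>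

section \<open>Arcs from Lipschitz maps\<close>

lemma pathin_rescaled_1_lipschitz:
  assumes L: "0 \<le> L" and h: "\<And>t. t \<in> {0..L} \<Longrightarrow> h t \<in> mspace m"
    and lip: "\<And>s t. s \<in> {0..L} \<Longrightarrow> t \<in> {0..L} \<Longrightarrow> mdist m (h s) (h t) \<le> \<bar>s - t\<bar>"
  shows "pathin (mtopology_of m) (\<lambda>t. h (L * t))"
proof -
  have scaled: "L * t \<in> {0..L}" if "t \<in> {0..1}" for t
    using that L by (auto simp: mult_left_le)
  have "Lipschitz_continuous_map (submetric euclidean_metric {0..1}) m (\<lambda>t. h (L * t))"
    unfolding Lipschitz_continuous_map_def
  proof (intro conjI exI ballI)
    show "(\<lambda>t. h (L * t)) \<in> mspace (submetric euclidean_metric {0..1}) \<rightarrow> mspace m"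
      using h scaled by auto
    fix s t :: real
    assume "s \<in> mspace (submetric euclidean_metric {0..1})" "t \<in> mspace (submetric euclidean_metric {0..1})"
    then have "mdist m (h (L * s)) (h (L * t)) \<le> \<bar>L * s - L * t\<bar>"
      using lip scaled by simp
    also have "\<dots> = L * mdist (submetric euclidean_metric {0..1}) s t"
      using L by (simp add: dist_real_def abs_mult right_diff_distrib[symmetric])
    finally show "mdist m (h (L * s)) (h (L * t)) \<le> L * mdist (submetric euclidean_metric {0..1}) s t" .
  qed
  then show ?thesis
    unfolding pathin_def
    by (metis Lipschitz_continuous_imp_continuous_map mtopology_of_euclidean mtopology_of_submetric)
qed

lemma inj_on_isometry:
  assumes "\<And>s t. s \<in> S \<Longrightarrow> t \<in> S \<Longrightarrow> mdist m (h s) (h t) = dist s t"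
    and "\<And>t. t \<in> S \<Longrightarrow> h t \<in> mspace m"
  shows "inj_on h S"
  using assms by (intro inj_onI) (metis dist_eq_0_iff mdist_zero)

lemma arc_in_rescaled_1_lipschitz:
  assumes L: "0 < L" and h: "\<And>t. t \<in> {0..L} \<Longrightarrow> h t \<in> mspace m"
    and lip: "\<And>s t. s \<in> {0..L} \<Longrightarrow> t \<in> {0..L} \<Longrightarrow> mdist m (h s) (h t) \<le> \<bar>s - t\<bar>"
    and inj: "inj_on h {0..L}"
  shows "arc_in (mtopology_of m) (\<lambda>t. h (L * t))" and "(\<lambda>t. h (L * t)) ` {0..1} = h ` {0..L}"
proof -
  have "inj_on (\<lambda>t. h (L * t)) {0..1}"
    using inj L by (intro inj_onI) (auto dest: inj_onD simp: mult_left_le)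
  then show "arc_in (mtopology_of m) (\<lambda>t. h (L * t))"
    unfolding arc_in_def using pathin_rescaled_1_lipschitz[of L h m] L h lip by simp
  have "(*) L ` {0..1} = {0..L}"
    using L by simp
  then show "(\<lambda>t. h (L * t)) ` {0..1} = h ` {0..L}"
    by (metis image_image)
qed

section \<open>Segments in geodesic metric trees\<close>

locale geodesic_metric_tree =
  fixes m :: "'a metric"
  assumes metric_tree: "metric_tree m" and geodesic_space: "geodesic_space m"
begin

sublocale Metric_space "mspace m" "mdist m"
  by (rule Metric_space_mspace_mdist)

abbreviation "M \<equiv> mspace m"
abbreviation "d \<equiv> mdist m"

definition geodesic :: "'a \<Rightarrow> 'a \<Rightarrow> real \<Rightarrow> 'a" where
  "geodesic x y = (SOME \<gamma>. \<gamma> ` {0..d x y} \<subseteq> M \<and> \<gamma> 0 = x \<and> \<gamma> (d x y) = y \<and>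
     (\<forall>s\<in>{0..d x y}. \<forall>t\<in>{0..d x y}. d (\<gamma> s) (\<gamma> t) = \<bar>s - t\<bar>))"

definition segment :: "'a \<Rightarrow> 'a \<Rightarrow> 'a set" where
  "segment x y = geodesic x y ` {0..d x y}"

context
  fixes x y
  assumes x: "x \<in> M" and y: "y \<in> M"
begin

lemma geodesic_spec:
  "geodesic x y ` {0..d x y} \<subseteq> M" "geodesic x y 0 = x" "geodesic x y (d x y) = y"
  "\<And>s t. s \<in> {0..d x y} \<Longrightarrow> t \<in> {0..d x y} \<Longrightarrow> d (geodesic x y s) (geodesic x y t) = \<bar>s - t\<bar>"
proof -
  have "\<exists>\<gamma>. \<gamma> ` {0..d x y} \<subseteq> M \<and> \<gamma> 0 = x \<and> \<gamma> (d x y) = y \<and>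
     (\<forall>s\<in>{0..d x y}. \<forall>t\<in>{0..d x y}. d (\<gamma> s) (\<gamma> t) = \<bar>s - t\<bar>)"
    using geodesic_space x y unfolding geodesic_space_def by blast
  from someI_ex[OF this, folded geodesic_def]
  show "geodesic x y ` {0..d x y} \<subseteq> M" "geodesic x y 0 = x" "geodesic x y (d x y) = y"
    "\<And>s t. s \<in> {0..d x y} \<Longrightarrow> t \<in> {0..d x y} \<Longrightarrow> d (geodesic x y s) (geodesic x y t) = \<bar>s - t\<bar>"
    by auto
qed

lemma geodesic_in_space: "t \<in> {0..d x y} \<Longrightarrow> geodesic x y t \<in> M"
  using geodesic_spec(1) by blast

lemma dist_start_geodesic: "t \<in> {0..d x y} \<Longrightarrow> d x (geodesic x y t) = t"
  using geodesic_spec(4)[of 0 t] by (simp add: geodesic_spec(2))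

lemma dist_geodesic_end: "t \<in> {0..d x y} \<Longrightarrow> d (geodesic x y t) y = d x y - t"
  using geodesic_spec(4)[of t "d x y"] by (simp add: geodesic_spec(3))

lemma geodesic_in_segment: "t \<in> {0..d x y} \<Longrightarrow> geodesic x y t \<in> segment x y"
  by (simp add: segment_def)

lemma start_mem_segment: "x \<in> segment x y"
  using geodesic_in_segment[of 0] by (simp add: geodesic_spec(2))

lemma end_mem_segment: "y \<in> segment x y"
  using geodesic_in_segment[of "d x y"] by (simp add: geodesic_spec(3))

lemma segment_subset_space: "segment x y \<subseteq> M"
  using geodesic_spec(1) by (simp add: segment_def)

lemma dist_add_of_mem_segment: "z \<in> segment x y \<Longrightarrow> d x z + d z y = d x y"
  unfolding segment_def using dist_start_geodesic dist_geodesic_end by fastforce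

lemma geodesic_dist_of_mem_segment: "z \<in> segment x y \<Longrightarrow> geodesic x y (d x z) = z"
  unfolding segment_def using dist_start_geodesic by fastforce

lemma inj_on_geodesic: "inj_on (geodesic x y) {0..d x y}"
  using geodesic_spec(4) geodesic_in_space by (intro inj_on_isometry) (auto simp: dist_real_def)

lemma geodesic_arc:
  assumes "x \<noteq> y"
  shows "arc_in (mtopology_of m) (\<lambda>t. geodesic x y (d x y * t))"
    and "(\<lambda>t. geodesic x y (d x y * t)) ` {0..1} = segment x y"
proof -
  have pos: "0 < d x y"
    using assms x y by simp
  have lip: "d (geodesic x y s) (geodesic x y t) \<le> \<bar>s - t\<bar>"
    if "s \<in> {0..d x y}" "t \<in> {0..d x y}" for s t
    using geodesic_spec(4)[OF that] by simp
  note arc = arc_in_rescaled_1_lipschitz[OF pos geodesic_in_space lip inj_on_geodesic]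
  show "arc_in (mtopology_of m) (\<lambda>t. geodesic x y (d x y * t))"
    by (rule arc(1))
  show "(\<lambda>t. geodesic x y (d x y * t)) ` {0..1} = segment x y"
    unfolding segment_def by (rule arc(2))
qed

lemma lipschitz_arc_image_eq_segment:
  assumes L: "0 < L" and h: "\<And>t. t \<in> {0..L} \<Longrightarrow> h t \<in> M"
    and lip: "\<And>s t. s \<in> {0..L} \<Longrightarrow> t \<in> {0..L} \<Longrightarrow> d (h s) (h t) \<le> \<bar>s - t\<bar>"
    and inj: "inj_on h {0..L}" and h0: "h 0 = x" and hL: "h L = y"
  shows "h ` {0..L} = segment x y"
proof -
  have "x \<noteq> y"
    using inj L h0 hL by (auto dest: inj_onD)
  then have "\<exists>g. arc_in (mtopology_of m) g \<and> g 0 = x \<and> g 1 = y \<and> segment x y = g ` {0..1}"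
    using geodesic_arc geodesic_spec(2,3)
    by (intro exI[of _ "\<lambda>t. geodesic x y (d x y * t)"]) simp
  moreover have "\<exists>g. arc_in (mtopology_of m) g \<and> g 0 = x \<and> g 1 = y \<and> h ` {0..L} = g ` {0..1}"
    using arc_in_rescaled_1_lipschitz[OF L h lip inj] h0 hL
    by (intro exI[of _ "\<lambda>t. h (L * t)"]) simp
  moreover have "\<exists>!A. \<exists>g. arc_in (mtopology_of m) g \<and> g 0 = x \<and> g 1 = y \<and> A = g ` {0..1}"
    using metric_tree x y \<open>x \<noteq> y\<close> unfolding metric_tree_def by blast
  ultimately show ?thesis
    by blast
qed

end

lemma segment_refl: "x \<in> M \<Longrightarrow> segment x x = {x}"
  using geodesic_spec(2) by (simp add: segment_def)

definition concat_geodesic :: "'a \<Rightarrow> 'a \<Rightarrow> 'a \<Rightarrow> real \<Rightarrow> 'a" where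
  "concat_geodesic u c z t = (if t \<le> d u c then geodesic u c t else geodesic c z (t - d u c))"

context
  fixes u c z
  assumes u: "u \<in> M" and c: "c \<in> M" and z: "z \<in> M"
begin

lemma concat_geodesic_first: "t \<le> d u c \<Longrightarrow> concat_geodesic u c z t = geodesic u c t"
  by (simp add: concat_geodesic_def)

lemma concat_geodesic_second: "d u c \<le> t \<Longrightarrow> concat_geodesic u c z t = geodesic c z (t - d u c)"
  using geodesic_spec(3)[OF u c] geodesic_spec(2)[OF c z] by (auto simp: concat_geodesic_def)

lemma concat_geodesic_on_first:
  "t \<in> {0..d u c} \<Longrightarrow> concat_geodesic u c z t \<in> segment u c \<and> d u (concat_geodesic u c z t) = t"
  using concat_geodesic_first geodesic_in_segment[OF u c] dist_start_geodesic[OF u c] by simp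

lemma concat_geodesic_on_second:
  "t \<in> {d u c..d u c + d c z} \<Longrightarrow>
    concat_geodesic u c z t \<in> segment c z \<and> d c (concat_geodesic u c z t) = t - d u c"
  using concat_geodesic_second geodesic_in_segment[OF c z] dist_start_geodesic[OF c z] by simp

lemma concat_geodesic_image:
  "concat_geodesic u c z ` {0..d u c + d c z} = segment u c \<union> segment c z"
proof -
  have "{0..d u c + d c z} = {0..d u c} \<union> {d u c..d u c + d c z}"
    using ivl_disj_un_two_touch(4)[of 0 "d u c" "d u c + d c z"] by simp
  moreover have "concat_geodesic u c z ` {0..d u c} = segment u c"
    using concat_geodesic_first by (simp add: segment_def)
  moreover have "concat_geodesic u c z ` {d u c..d u c + d c z} =
      (\<lambda>t. geodesic c z (t - d u c)) ` {d u c..d u c + d c z}"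
    using concat_geodesic_second by simp
  moreover have "(\<lambda>t. geodesic c z (t - d u c)) ` {d u c..d u c + d c z} = segment c z"
    unfolding segment_def by (auto simp: image_iff intro!: bexI[where x = "_ + d u c"])
  ultimately show ?thesis
    by (simp add: image_Un)
qed

lemma concat_geodesic_in_space: "t \<in> {0..d u c + d c z} \<Longrightarrow> concat_geodesic u c z t \<in> M"
  using concat_geodesic_image segment_subset_space[OF u c] segment_subset_space[OF c z] by blast

lemma dist_concat_geodesic_le:
  assumes "s \<in> {0..d u c + d c z}" "t \<in> {0..d u c + d c z}"
  shows "d (concat_geodesic u c z s) (concat_geodesic u c z t) \<le> \<bar>s - t\<bar>"
  using assms
proof (induction s t rule: linorder_wlog)
  case (le s t)
  consider "t \<le> d u c" | "d u c \<le> s" | "s \<le> d u c" "d u c \<le> t"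
    by linarith
  then show ?case
  proof cases
    case 1
    then show ?thesis
      using le geodesic_spec(4)[OF u c, of s t] concat_geodesic_first by simp
  next
    case 2
    then show ?thesis
      using le geodesic_spec(4)[OF c z, of "s - d u c" "t - d u c"] concat_geodesic_second by simp
  next
    case 3
    then have "concat_geodesic u c z s \<in> M" "concat_geodesic u c z t \<in> M"
      using le concat_geodesic_in_space by auto
    then have "d (concat_geodesic u c z s) (concat_geodesic u c z t) \<le>
        d (concat_geodesic u c z s) c + d c (concat_geodesic u c z t)"
      using c by (simp add: mdist_triangle)
    also have "\<dots> = t - s"
      using 3 le concat_geodesic_on_first[of s] concat_geodesic_on_second[of t]
        dist_add_of_mem_segment[OF u c] by (smt (verit) atLeastAtMost_iff)
    finally show ?thesis
      using le by simp
  qed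
qed (auto simp: commute abs_minus_commute)

lemma inj_on_concat_geodesic:
  assumes meet: "segment u c \<inter> segment c z = {c}"
  shows "inj_on (concat_geodesic u c z) {0..d u c + d c z}"
proof (rule inj_onI)
  fix s t assume "s \<in> {0..d u c + d c z}" "t \<in> {0..d u c + d c z}"
    and "concat_geodesic u c z s = concat_geodesic u c z t"
  then show "s = t"
  proof (induction s t rule: linorder_wlog)
    case (le s t)
    consider "t \<le> d u c" | "d u c \<le> s" | "s \<le> d u c" "d u c \<le> t"
      by linarith
    then show ?case
    proof cases
      case 1
      then show ?thesis
        using le inj_on_geodesic[OF u c] concat_geodesic_first by (auto dest: inj_onD)
    next
      case 2
      then have "t - d u c = s - d u c"
        using le inj_on_geodesic[OF c z] concat_geodesic_second by (auto dest: inj_onD)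
      then show ?thesis
        by simp
    next
      case 3
      have hs: "concat_geodesic u c z s \<in> segment u c \<and> d u (concat_geodesic u c z s) = s"
        using 3 le(2) by (intro concat_geodesic_on_first) simp
      have ht: "concat_geodesic u c z t \<in> segment c z \<and> d c (concat_geodesic u c z t) = t - d u c"
        using 3 le(3) by (intro concat_geodesic_on_second) simp
      have "concat_geodesic u c z t \<in> segment u c \<inter> segment c z"
        using hs ht le(4) by simp
      then have "concat_geodesic u c z t = c"
        using meet by simp
      then have "d u c = s" "t - d u c = 0"
        using hs ht le(4) c by simp_all
      then show ?thesis
        by simp
    qed
  qed metis
qed

end

lemma segment_concat:
  assumes u: "u \<in> M" and c: "c \<in> M" and z: "z \<in> M"
    and meet: "segment u c \<inter> segment c z = {c}"
  shows "segment u z = segment u c \<union> segment c z"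
proof (cases "d u c + d c z = 0")
  case True
  then have "d u c = 0" "d c z = 0"
    using nonneg[of u c] nonneg[of c z] by linarith+
  then show ?thesis
    using segment_refl[OF u] u c z by simp
next
  case False
  then have "0 < d u c + d c z"
    using nonneg[of u c] nonneg[of c z] by linarith
  then have "concat_geodesic u c z ` {0..d u c + d c z} = segment u z"
    using geodesic_spec(2)[OF u c] geodesic_spec(3)[OF c z] concat_geodesic_first[OF u c z, of 0]
      concat_geodesic_second[OF u c z, of "d u c + d c z"]
    by (intro lipschitz_arc_image_eq_segment[OF u z] concat_geodesic_in_space[OF u c z]
        dist_concat_geodesic_le[OF u c z] inj_on_concat_geodesic[OF u c z meet]) simp_all
  then show ?thesis
    using concat_geodesic_image[OF u c z] by simp
qed

lemma mem_segment_iff: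
  assumes x: "x \<in> M" and y: "y \<in> M"
  shows "z \<in> segment x y \<longleftrightarrow> z \<in> M \<and> d x z + d z y = d x y"
proof
  show "z \<in> segment x y \<Longrightarrow> z \<in> M \<and> d x z + d z y = d x y"
    using segment_subset_space[OF x y] dist_add_of_mem_segment[OF x y] by blast
  assume z: "z \<in> M \<and> d x z + d z y = d x y"
  have "q = z" if "q \<in> segment x z" "q \<in> segment z y" for q
  proof -
    have q: "q \<in> M"
      using that(1) segment_subset_space[OF x] z by blast
    have "d x y \<le> d x q + d q y"
      using x y q by (simp add: mdist_triangle)
    then have "d z q \<le> 0"
      using dist_add_of_mem_segment[OF x _ that(1)] dist_add_of_mem_segment[OF _ y that(2)] z
      by (simp add: mdist_commute)
    then show "q = z"
      using q z by (metis antisym nonneg zero)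
  qed
  moreover have "z \<in> segment x z" "z \<in> segment z y"
    using end_mem_segment[OF x] start_mem_segment[OF _ y] z by blast+
  ultimately have "segment x y = segment x z \<union> segment z y"
    using segment_concat[OF x _ y] z by blast
  then show "z \<in> segment x y"
    using \<open>z \<in> segment x z\<close> by blast
qed

lemma segment_commute: "x \<in> M \<Longrightarrow> y \<in> M \<Longrightarrow> segment x y = segment y x"
  using mem_segment_iff by (auto simp: commute add.commute)

lemma dist_le_of_mem_segment: "x \<in> M \<Longrightarrow> y \<in> M \<Longrightarrow> z \<in> segment x y \<Longrightarrow> d x z \<le> d x y"
  using dist_add_of_mem_segment[of x y z] nonneg[of z y] by linarith

lemma segment_trans:
  assumes w: "w \<in> M" and z: "z \<in> M" and c: "c \<in> segment w z" and q: "q \<in> segment c z"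
  shows "q \<in> segment w z" and "c \<in> segment w q"
proof -
  have cM: "c \<in> M"
    using c segment_subset_space[OF w z] by blast
  have qM: "q \<in> M"
    using q segment_subset_space[OF cM z] by blast
  have "d w c + d c z = d w z" "d c q + d q z = d c z"
    using dist_add_of_mem_segment[OF w z c] dist_add_of_mem_segment[OF cM z q] by simp_all
  moreover have "d w q \<le> d w c + d c q" "d w z \<le> d w q + d q z"
    using w z cM qM by (simp_all add: mdist_triangle)
  ultimately have "d w q + d q z = d w z" "d w c + d c q = d w q"
    by linarith+
  then show "q \<in> segment w z" "c \<in> segment w q"
    by (simp_all add: mem_segment_iff[OF w z] mem_segment_iff[OF w qM] cM qM)
qed

lemma segment_subset_segment:
  assumes x: "x \<in> M" and p: "p \<in> M" and c: "c \<in> segment x p"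
  shows "segment x c \<subseteq> segment x p"
proof -
  have "c \<in> M"
    using c segment_subset_space[OF x p] by blast
  then show ?thesis
    using segment_trans(1)[OF p x] c segment_commute x p by blast
qed

lemma dist_of_mem_segment:
  assumes x: "x \<in> M" and p: "p \<in> M" and a: "a \<in> segment x p" and b: "b \<in> segment x p"
  shows "d a b = \<bar>d x a - d x b\<bar>"
proof -
  have "d x a \<in> {0..d x p}" "d x b \<in> {0..d x p}"
    using dist_le_of_mem_segment x p a b by auto
  then show ?thesis
    using geodesic_spec(4)[OF x p] geodesic_dist_of_mem_segment[OF x p] a b by metis
qed

lemma farthest_common_point:
  assumes w: "w \<in> M" and u: "u \<in> M" and z: "z \<in> M"
  obtains c where "c \<in> segment w u" "c \<in> segment w z"
    "\<And>q. q \<in> segment w u \<Longrightarrow> q \<in> segment w z \<Longrightarrow> d w q \<le> d w c"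
proof -
  define S where "S = {t \<in> {0..d w u}. t + d (geodesic w u t) z = d w z}"
  have S_iff: "t \<in> S \<longleftrightarrow> t \<in> {0..d w u} \<and> geodesic w u t \<in> segment w z" for t
    using mem_segment_iff[OF w z] geodesic_in_space[OF w u] dist_start_geodesic[OF w u]
    by (auto simp: S_def)
  have "1-lipschitz_on {0..d w u} (\<lambda>t. d (geodesic w u t) z)"
  proof (rule lipschitz_onI)
    fix s t assume "s \<in> {0..d w u}" "t \<in> {0..d w u}"
    then show "dist (d (geodesic w u s) z) (d (geodesic w u t) z) \<le> 1 * dist s t"
      using mdist_reverse_triangle[of "geodesic w u s" z "geodesic w u t"] geodesic_spec(4)[OF w u]
        geodesic_in_space[OF w u] z by (simp add: dist_real_def commute)
  qed simp
  then have "continuous_on {0..d w u} (\<lambda>t. t + d (geodesic w u t) z)"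
    by (intro continuous_intros lipschitz_on_continuous_on)
  then have "closed S"
    unfolding S_def by (rule continuous_closed_preimage_constant) simp
  moreover have "S = {0..d w u} \<inter> S"
    by (auto simp: S_def)
  ultimately have "compact S"
    by (metis compact_Int_closed compact_Icc)
  moreover have "0 \<in> S"
    using S_iff start_mem_segment[OF w z] geodesic_spec(2)[OF w u] by simp
  ultimately obtain t0 where t0: "t0 \<in> S" and t0_max: "\<And>t. t \<in> S \<Longrightarrow> t \<le> t0"
    using compact_attains_sup[of S] by blast
  show ?thesis
  proof
    show "geodesic w u t0 \<in> segment w u" "geodesic w u t0 \<in> segment w z"
      using t0 S_iff geodesic_in_segment[OF w u] by auto
    fix q assume "q \<in> segment w u" "q \<in> segment w z"
    then have "d w q \<in> S"
      using S_iff[of "d w q"] dist_le_of_mem_segment[OF w u] geodesic_dist_of_mem_segment[OF w u]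
      by auto
    then show "d w q \<le> d w (geodesic w u t0)"
      using t0_max t0 dist_start_geodesic[OF w u] by (auto simp: S_def)
  qed
qed

text \<open>Every geodesic triangle is a tripod: the farthest point \<open>c\<close> of \<open>[w,u] \<inter> [w,z]\<close> from \<open>w\<close>
  splits \<open>[u,z]\<close> into \<open>[u,c]\<close> and \<open>[c,z]\<close>.\<close>

lemma segment_tripod:
  assumes u: "u \<in> M" and w: "w \<in> M" and z: "z \<in> M"
  shows "\<exists>c. c \<in> segment w u \<and> c \<in> segment w z \<and> c \<in> segment u z \<and>
    segment u z \<subseteq> segment w u \<union> segment w z"
proof -
  obtain c where c_wu: "c \<in> segment w u" and c_wz: "c \<in> segment w z"
    and c_max: "\<And>q. q \<in> segment w u \<Longrightarrow> q \<in> segment w z \<Longrightarrow> d w q \<le> d w c"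
    using farthest_common_point[OF w u z] by blast
  have cM: "c \<in> M"
    using c_wu segment_subset_space[OF w u] by blast
  have cu: "segment c u \<subseteq> segment w u" and cz: "segment c z \<subseteq> segment w z"
    using segment_trans(1)[OF w u c_wu] segment_trans(1)[OF w z c_wz] by blast+
  have "q = c" if q: "q \<in> segment u c" "q \<in> segment c z" for q
  proof -
    have "q \<in> segment c u"
      using q segment_commute[OF u cM] by simp
    then have q_wu: "q \<in> segment w u" and "c \<in> segment w q"
      using segment_trans[OF w u c_wu] by blast+
    then have qM: "q \<in> M" and "d w c + d c q = d w q"
      using segment_subset_space[OF w u] dist_add_of_mem_segment[OF w _ \<open>c \<in> segment w q\<close>]
      by blast+
    moreover have "d w q \<le> d w c"
      using c_max[OF q_wu] cz q(2) by blast
    ultimately have "d c q = 0"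
      using nonneg[of c q] by linarith
    then show "q = c"
      using cM qM zero by blast
  qed
  then have "segment u c \<inter> segment c z = {c}"
    using end_mem_segment[OF u cM] start_mem_segment[OF cM z] by blast
  then have "segment u z = segment u c \<union> segment c z"
    by (rule segment_concat[OF u cM z])
  then show ?thesis
    using c_wu c_wz cu cz end_mem_segment[OF u cM] segment_commute[OF u cM] by blast
qed

section \<open>The Gromov product\<close>

definition gromov_product :: "'a \<Rightarrow> 'a \<Rightarrow> 'a \<Rightarrow> real" where
  "gromov_product x p q = (d x p + d x q - d p q) / 2"

lemma gromov_product_commute: "gromov_product x p q = gromov_product x q p"
  by (simp add: gromov_product_def commute add.commute)

context
  fixes x p q
  assumes x: "x \<in> M" and p: "p \<in> M" and q: "q \<in> M"
begin

lemma gromov_product_nonneg: "0 \<le> gromov_product x p q"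
  using triangle[OF p x q] by (simp add: gromov_product_def commute)

lemma gromov_product_le_dist: "gromov_product x p q \<le> d x p"
  using triangle[OF x p q] by (simp add: gromov_product_def)

lemma gromov_product_le_dist_of_mem_segment:
  assumes "c \<in> segment p q"
  shows "gromov_product x p q \<le> d x c"
proof -
  have "c \<in> M"
    using assms segment_subset_space[OF p q] by blast
  then show ?thesis
    using dist_add_of_mem_segment[OF p q assms] triangle[OF x \<open>c \<in> M\<close> p] triangle[OF x \<open>c \<in> M\<close> q]
    by (simp add: gromov_product_def commute)
qed

lemma tripod_center:
  obtains c where "c \<in> segment x p" "c \<in> segment x q" "c \<in> segment p q"
    "d x c = gromov_product x p q"
proof -
  obtain c where c: "c \<in> segment x p" "c \<in> segment x q" "c \<in> segment p q"
    using segment_tripod[OF p x q] by blast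
  then have "d x c + d c p = d x p" "d x c + d c q = d x q" "d p c + d c q = d p q"
    using dist_add_of_mem_segment x p q by blast+
  then have "d x c = gromov_product x p q"
    by (simp add: gromov_product_def commute)
  with c that show ?thesis
    by blast
qed

lemma geodesic_eq_of_le_gromov_product:
  assumes t: "0 \<le> t" "t \<le> gromov_product x p q"
  shows "geodesic x p t = geodesic x q t"
proof -
  obtain c where c: "c \<in> segment x p" "c \<in> segment x q" "d x c = gromov_product x p q"
    using tripod_center by blast
  have cM: "c \<in> M"
    using c(1) segment_subset_space[OF x p] by blast
  define y where "y = geodesic x c t"
  have "t \<in> {0..d x c}"
    using t c(3) by simp
  then have "y \<in> segment x c" "d x y = t"
    using geodesic_in_segment[OF x cM] dist_start_geodesic[OF x cM] by (simp_all add: y_def)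
  then have "y \<in> segment x p" "y \<in> segment x q" "d x y = t"
    using segment_subset_segment[OF x p c(1)] segment_subset_segment[OF x q c(2)] by blast+
  then show ?thesis
    using geodesic_dist_of_mem_segment[OF x p] geodesic_dist_of_mem_segment[OF x q] by metis
qed

end

lemma gromov_product_ultrametric:
  assumes x: "x \<in> M" and p: "p \<in> M" and q: "q \<in> M" and r: "r \<in> M"
  shows "min (gromov_product x p q) (gromov_product x q r) \<le> gromov_product x p r"
proof -
  define t where "t = min (gromov_product x p q) (gromov_product x q r)"
  have t0: "0 \<le> t"
    using gromov_product_nonneg x p q r by (simp add: t_def)
  have tp: "t \<in> {0..d x p}" and tr: "t \<in> {0..d x r}"
    using t0 gromov_product_le_dist[OF x p q] gromov_product_le_dist[OF x r q]
    by (auto simp: t_def gromov_product_commute[of x q r])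
  define y where "y = geodesic x p t"
  have "y = geodesic x r t"
    using geodesic_eq_of_le_gromov_product[OF x p q t0] geodesic_eq_of_le_gromov_product[OF x q r t0]
    by (simp add: y_def t_def)
  moreover have "y \<in> M"
    using geodesic_in_space[OF x p tp] by (simp add: y_def)
  ultimately have "d p r \<le> (d x p - t) + (d x r - t)"
    using triangle[OF p _ r, of y] dist_geodesic_end[OF x p tp] dist_geodesic_end[OF x r tr]
    by (simp add: y_def commute)
  then show ?thesis
    by (simp add: gromov_product_def t_def)
qed

lemma mem_segment_of_gromov_product_le:
  assumes x: "x \<in> M" and p: "p \<in> M" and q: "q \<in> M"
    and c: "c \<in> segment x p" and le: "gromov_product x q p \<le> d x c"
  shows "c \<in> segment q p"
proof -
  obtain y where y: "y \<in> segment x p" "y \<in> segment q p" "d x y = gromov_product x q p"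
    using tripod_center[OF x q p] by metis
  have "y \<in> M" "c \<in> M"
    using y(1) c segment_subset_space[OF x p] by blast+
  moreover have "d y c + d c p = d y p"
    using dist_of_mem_segment[OF x p y(1) c] dist_of_mem_segment[OF x p c end_mem_segment[OF x p]]
      dist_of_mem_segment[OF x p y(1) end_mem_segment[OF x p]] y(3) le
      dist_le_of_mem_segment[OF x p c] by simp
  ultimately have "c \<in> segment y p"
    using mem_segment_iff p by blast
  then show ?thesis
    using segment_trans(1)[OF q p y(2)] by blast
qed

lemma gromov_product_eq_of_mem_segment:
  "x \<in> M \<Longrightarrow> z \<in> M \<Longrightarrow> p \<in> segment x z \<Longrightarrow> gromov_product x p z = d x p"
  using dist_add_of_mem_segment[of x z p] by (simp add: gromov_product_def)

section \<open>Branches\<close>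

lemma mem_segment_iff_of_not_mem_segment:
  assumes u: "u \<in> M" and z: "z \<in> M" and z': "z' \<in> M" and c: "c \<notin> segment z z'"
  shows "c \<in> segment u z \<longleftrightarrow> c \<in> segment u z'"
proof -
  have "c \<in> segment u z" if "c \<in> segment u z'" "c \<notin> segment z z'" "z \<in> M" "z' \<in> M" for z z'
    using segment_tripod[OF u that(3,4)] segment_commute[OF u that(3)] that(1,2) by blast
  then show ?thesis
    using c z z' segment_commute[OF z z'] by blast
qed

lemma openin_mem_segment_eq:
  assumes u: "u \<in> M" and c: "c \<in> M"
  shows "openin mtopology {z \<in> M - {c}. (c \<in> segment u z) = b}"
  unfolding openin_mtopology
proof (intro conjI allI impI)
  fix z assume "z \<in> {z \<in> M - {c}. (c \<in> segment u z) = b}"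
  then have z: "z \<in> M" "z \<noteq> c" and zb: "(c \<in> segment u z) = b"
    by auto
  have "mball z (d z c) \<subseteq> {z \<in> M - {c}. (c \<in> segment u z) = b}"
  proof
    fix z' assume "z' \<in> mball z (d z c)"
    then have z': "z' \<in> M" and near: "d z z' < d z c"
      by auto
    then have "c \<notin> segment z z'"
      using dist_le_of_mem_segment[OF z(1) z'] by fastforce
    then show "z' \<in> {z \<in> M - {c}. (c \<in> segment u z) = b}"
      using mem_segment_iff_of_not_mem_segment[OF u z(1) z'] zb z' near by auto
  qed
  moreover have "0 < d z c"
    using z c by simp
  ultimately show "\<exists>r>0. mball z r \<subseteq> {z \<in> M - {c}. (c \<in> segment u z) = b}"
    by blast
qed auto

text \<open>A cut point of a segment separates its endpoints, because membership of \<open>c\<close> in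
  \<open>[u,z]\<close> is locally constant in \<open>z \<noteq> c\<close>.\<close>

lemma mem_connectedin_of_mem_segment:
  assumes u: "u \<in> M" and c: "c \<in> M" and cuv: "c \<in> segment u v" and uc: "u \<noteq> c" and vc: "v \<noteq> c"
    and T: "connectedin (mtopology_of m) T" "u \<in> T" "v \<in> T"
  shows "c \<in> T"
proof (rule ccontr)
  assume "c \<notin> T"
  moreover have "T \<subseteq> M"
    using T(1) connectedin_subset_topspace by fastforce
  moreover have "u \<in> {z \<in> M - {c}. (c \<in> segment u z) = False}"
    using u uc segment_refl[OF u] by simp
  moreover have "v \<in> {z \<in> M - {c}. (c \<in> segment u z) = True}"
    using T(3) \<open>T \<subseteq> M\<close> vc cuv by auto
  ultimately show False
    using connectedinD[OF T(1)[unfolded mtopology_of_def] openin_mem_segment_eq[OF u c, of False]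
        openin_mem_segment_eq[OF u c, of True]] T(2,3)
    by blast
qed

lemma connectedin_segment:
  assumes u: "u \<in> M" and v: "v \<in> M"
  shows "connectedin (mtopology_of m) (segment u v)"
proof (cases "u = v")
  case True
  then show ?thesis
    using segment_refl[OF u] u by simp
next
  case False
  then show ?thesis
    using connectedin_path_image geodesic_arc[OF u v False] unfolding arc_in_def by metis
qed

definition branch_at :: "'a \<Rightarrow> 'a \<Rightarrow> 'a set" where
  "branch_at c u = connected_component_of_set (subtopology (mtopology_of m) (M - {c})) u"

lemma branch_at_in_branches: "u \<in> M \<Longrightarrow> u \<noteq> c \<Longrightarrow> branch_at c u \<in> branches m c"
  by (simp add: branch_at_def branches_def connected_component_in_connected_components_of)

lemma mem_branch_at_iff:
  assumes c: "c \<in> M" and u: "u \<in> M" "u \<noteq> c"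
  shows "v \<in> branch_at c u \<longleftrightarrow> v \<in> M \<and> v \<noteq> c \<and> c \<notin> segment u v"
proof -
  have "v \<in> branch_at c u \<longleftrightarrow>
      (\<exists>T. connectedin (mtopology_of m) T \<and> T \<subseteq> M - {c} \<and> u \<in> T \<and> v \<in> T)"
    by (simp add: branch_at_def connected_component_of_def connectedin_subtopology)
  also have "\<dots> \<longleftrightarrow> v \<in> M \<and> v \<noteq> c \<and> c \<notin> segment u v"
  proof
    assume "\<exists>T. connectedin (mtopology_of m) T \<and> T \<subseteq> M - {c} \<and> u \<in> T \<and> v \<in> T"
    then show "v \<in> M \<and> v \<noteq> c \<and> c \<notin> segment u v"
      using mem_connectedin_of_mem_segment[OF u(1) c _ u(2)] by blast
  next
    assume v: "v \<in> M \<and> v \<noteq> c \<and> c \<notin> segment u v"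
    then show "\<exists>T. connectedin (mtopology_of m) T \<and> T \<subseteq> M - {c} \<and> u \<in> T \<and> v \<in> T"
      using connectedin_segment[OF u(1)] segment_subset_space[OF u(1)] start_mem_segment[OF u(1)]
        end_mem_segment[OF u(1)] by (intro exI[of _ "segment u v"]) blast
  qed
  finally show ?thesis .
qed

lemma branch_at_eq_iff:
  assumes c: "c \<in> M" and u: "u \<in> M" "u \<noteq> c" and v: "v \<in> M" "v \<noteq> c"
  shows "branch_at c u = branch_at c v \<longleftrightarrow> c \<notin> segment u v"
  using connected_component_of_equiv[of "subtopology (mtopology_of m) (M - {c})" u v]
    mem_branch_at_iff[OF c u, of v] u v by (simp add: branch_at_def set_eq_iff fun_eq_iff)

lemma bounded_space: "\<exists>B. \<forall>a\<in>M. \<forall>b\<in>M. d a b \<le> B"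
proof -
  have "compactin mtopology M"
    using metric_tree by (simp add: metric_tree_def mtopology_of_def compact_space_def)
  then show ?thesis
    using compactin_imp_mbounded mbounded_alt by blast
qed

lemma le_mdiam_branch_at:
  assumes c: "c \<in> M" and u: "u \<in> M" and r: "0 \<le> r" "r < d u c"
  shows "r \<le> mdiam m (branch_at c u)"
proof -
  have uc: "u \<noteq> c"
    using r u by auto
  define p where "p = geodesic u c r"
  have r_range: "r \<in> {0..d u c}"
    using r by simp
  then have p: "p \<in> M" "d u p = r"
    using geodesic_in_space[OF u c] dist_start_geodesic[OF u c] by (simp_all add: p_def)
  then have "c \<notin> segment u p"
    using dist_le_of_mem_segment[OF u p(1)] r by fastforce
  then have "u \<in> branch_at c u" "p \<in> branch_at c u"
    using mem_branch_at_iff[OF c u uc] segment_refl[OF u] end_mem_segment[OF u c] u uc p(1)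
    by auto
  moreover have "branch_at c u \<subseteq> M"
    using mem_branch_at_iff[OF c u uc] by blast
  moreover obtain B where "\<forall>a\<in>M. \<forall>b\<in>M. d a b \<le> B"
    using bounded_space by blast
  ultimately have "d u p \<le> mdiam m (branch_at c u)"
    unfolding mdiam_def by (intro cSup_upper) (auto intro!: bdd_aboveI[of _ B])
  then show ?thesis
    using p by simp
qed

end

lemma le_nth_sorted_desc:
  fixes ys :: "'a::linorder list"
  assumes "sorted_wrt (\<ge>) ys" and "k < length (filter (\<lambda>v. h \<le> v) ys)"
  shows "h \<le> ys ! k"
  using assms
proof (induction ys arbitrary: k)
  case Nil
  then show ?case
    by simp
next
  case (Cons y ys)
  show ?case
  proof (cases k)
    case 0
    obtain v where "v \<in> set (y # ys)" "h \<le> v"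
      using Cons.prems(2) by (metis filter_False length_0_conv less_zeroE)
    then show ?thesis
      using Cons.prems(1) 0 by auto
  next
    case (Suc k')
    then have "k' < length (filter (\<lambda>v. h \<le> v) ys)"
      using Cons.prems(2) by (simp split: if_splits)
    then show ?thesis
      using Cons.IH Cons.prems(1) Suc by simp
  qed
qed

lemma le_third_largest:
  fixes f :: "'b \<Rightarrow> 'a::linorder"
  assumes B: "finite B" and S: "S1 \<in> B" "S2 \<in> B" "S3 \<in> B" "S1 \<noteq> S2" "S1 \<noteq> S3" "S2 \<noteq> S3"
    and h: "h \<le> f S1" "h \<le> f S2" "h \<le> f S3"
  shows "h \<le> rev (sorted_list_of_multiset (image_mset f (mset_set B))) ! 2"
proof (rule le_nth_sorted_desc)
  define xs where "xs = rev (sorted_list_of_multiset (image_mset f (mset_set B)))"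
  show "sorted_wrt (\<ge>) xs"
    by (simp add: xs_def sorted_wrt_rev)
  have "mset (filter (\<lambda>v. h \<le> v) xs) = image_mset f (mset_set {b \<in> B. h \<le> f b})"
    using B by (simp add: xs_def filter_mset_image_mset filter_mset_mset_set)
  then have "length (filter (\<lambda>v. h \<le> v) xs) = card {b \<in> B. h \<le> f b}"
    by (metis size_image_mset size_mset size_mset_set)
  moreover have "card {S1, S2, S3} \<le> card {b \<in> B. h \<le> f b}"
    using B S h by (intro card_mono) auto
  ultimately show "2 < length (filter (\<lambda>v. h \<le> v) xs)"
    using S by simp
qed

context geodesic_metric_tree
begin

lemma branch_point_of_three_branches:
  assumes fin: "finite (branches m c)" and c: "c \<in> M"
    and u: "u1 \<in> M" "u2 \<in> M" "u3 \<in> M"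
    and distinct: "branch_at c u1 \<noteq> branch_at c u2" "branch_at c u1 \<noteq> branch_at c u3"
      "branch_at c u2 \<noteq> branch_at c u3"
    and r: "0 \<le> r" "r < d u1 c" "r < d u2 c" "r < d u3 c"
  shows "branch_point m c \<and> r \<le> Hbr m c"
proof
  have "u1 \<noteq> c" "u2 \<noteq> c" "u3 \<noteq> c"
    using r c by auto
  then have B: "branch_at c u1 \<in> branches m c" "branch_at c u2 \<in> branches m c"
      "branch_at c u3 \<in> branches m c"
    using branch_at_in_branches u by auto
  then have "card {branch_at c u1, branch_at c u2, branch_at c u3} \<le> card (branches m c)"
    using fin by (intro card_mono) auto
  then show "branch_point m c"
    using distinct c by (simp add: branch_point_def)
  show "r \<le> Hbr m c"
    unfolding Hbr_def
    using le_third_largest[OF fin B distinct] le_mdiam_branch_at[OF c] u r by auto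
qed

end

section \<open>Splitting finite sets of sphere points\<close>

lemma card_le_card_image_mult:
  assumes "finite F" and "\<And>p. p \<in> F \<Longrightarrow> card {q \<in> F. f q = f p} \<le> K"
  shows "card F \<le> card (f ` F) * K"
proof -
  have "F = (\<Union>y\<in>f ` F. {q \<in> F. f q = y})"
    by auto
  then have "card F \<le> (\<Sum>y\<in>f ` F. card {q \<in> F. f q = y})"
    by (metis assms(1) card_UN_le finite_imageI)
  also have "\<dots> \<le> card (f ` F) * K"
    using sum_bounded_above[of "f ` F" "\<lambda>y. card {q \<in> F. f q = y}" K] assms(2) by auto
  finally show ?thesis .
qed

context geodesic_metric_tree
begin

definition far_sphere :: "'a \<Rightarrow> real \<Rightarrow> real \<Rightarrow> 'a set" where
  "far_sphere x \<rho> s = {p \<in> M. d x p = s \<and> (\<exists>z\<in>M. p \<in> segment x z \<and> s + \<rho> \<le> d x z)}"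

definition split_depth :: "'a \<Rightarrow> 'a set \<Rightarrow> real" where
  "split_depth x F = Min {gromov_product x p q | p q. p \<in> F \<and> q \<in> F \<and> p \<noteq> q}"

text \<open>The choice of \<open>p\<close> is irrelevant: all geodesics from \<open>x\<close> to points of \<open>F\<close> agree up to
  depth \<open>split_depth x F\<close> (\<open>split_point_on_segment\<close>).\<close>

definition split_point :: "'a \<Rightarrow> 'a set \<Rightarrow> 'a" where
  "split_point x F = geodesic x (SOME p. p \<in> F) (split_depth x F)"

text \<open>The split point of \<open>F\<close> need not be a branch point (e.g.\ when \<open>x\<close> is a leaf); for a fiber, a
  point of another fiber is a witness (\<open>third_branch_witness_split_fiber\<close>).\<close>

definition third_branch_witness :: "'a \<Rightarrow> real \<Rightarrow> 'a set \<Rightarrow> 'a \<Rightarrow> bool" where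
  "third_branch_witness x \<rho> F w \<longleftrightarrow>
     w \<in> M \<and> \<rho> < d w (split_point x F) \<and> (\<forall>p\<in>F. split_point x F \<in> segment w p)"

end

locale far_sphere_set = geodesic_metric_tree +
  fixes x :: 'a and \<rho> s :: real and F :: "'a set"
  assumes center: "x \<in> M" and finite: "finite F" and subset: "F \<subseteq> far_sphere x \<rho> s"
    and two_le_card: "2 \<le> card F"
begin

lemma mem_space: "p \<in> F \<Longrightarrow> p \<in> M"
  and dist_center: "p \<in> F \<Longrightarrow> d x p = s"
  and extends: "p \<in> F \<Longrightarrow> \<exists>z\<in>M. p \<in> segment x z \<and> s + \<rho> \<le> d x z"
  using subset by (auto simp: far_sphere_def)

lemma finite_gromov_products: "finite {gromov_product x p q | p q. p \<in> F \<and> q \<in> F \<and> p \<noteq> q}"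
proof (rule finite_subset)
  show "finite {gromov_product x p q | p q. p \<in> F \<and> q \<in> F}"
    using finite_image_set2[of "\<lambda>p. p \<in> F" "\<lambda>q. q \<in> F" "gromov_product x"] finite by simp
qed blast

lemma split_depth_le: "p \<in> F \<Longrightarrow> q \<in> F \<Longrightarrow> p \<noteq> q \<Longrightarrow> split_depth x F \<le> gromov_product x p q"
  unfolding split_depth_def using finite_gromov_products by (intro Min_le) blast+

lemma split_depth_attained:
  obtains p q where "p \<in> F" "q \<in> F" "p \<noteq> q" "gromov_product x p q = split_depth x F"
proof -
  have "\<not> card F \<le> Suc 0"
    using two_le_card by simp
  then obtain p q where "p \<in> F" "q \<in> F" "p \<noteq> q"
    using card_le_Suc0_iff_eq[OF finite] by blast
  then have "split_depth x F \<in> {gromov_product x p q | p q. p \<in> F \<and> q \<in> F \<and> p \<noteq> q}"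
    unfolding split_depth_def using finite_gromov_products by (intro Min_in) blast+
  then obtain p' q' where "p' \<in> F" "q' \<in> F" "p' \<noteq> q'"
    "split_depth x F = gromov_product x p' q'"
    by blast
  then show ?thesis
    using that[of p' q'] by simp
qed

lemma gromov_product_less: "p \<in> F \<Longrightarrow> q \<in> F \<Longrightarrow> p \<noteq> q \<Longrightarrow> gromov_product x p q < s"
proof (rule ccontr)
  assume p: "p \<in> F" and q: "q \<in> F" and "p \<noteq> q" and "\<not> gromov_product x p q < s"
  moreover have "0 \<le> s"
    using dist_center[OF p] nonneg by metis
  ultimately have "geodesic x p s = geodesic x q s"
    using geodesic_eq_of_le_gromov_product[OF center mem_space[OF p] mem_space[OF q]] by simp
  moreover have "geodesic x p s = p" "geodesic x q s = q"
    using geodesic_spec(3)[OF center mem_space[OF p]] geodesic_spec(3)[OF center mem_space[OF q]]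
      dist_center[OF p] dist_center[OF q] by simp_all
  ultimately show False
    using \<open>p \<noteq> q\<close> by simp
qed

lemma split_depth_less: "split_depth x F < s"
proof -
  obtain p q where pq: "p \<in> F" "q \<in> F" "p \<noteq> q" "gromov_product x p q = split_depth x F"
    by (rule split_depth_attained)
  then show ?thesis
    using gromov_product_less[OF pq(1-3)] by simp
qed

lemma split_depth_nonneg: "0 \<le> split_depth x F"
proof -
  obtain p q where pq: "p \<in> F" "q \<in> F" "gromov_product x p q = split_depth x F"
    by (rule split_depth_attained)
  then show ?thesis
    using gromov_product_nonneg[OF center mem_space[OF pq(1)] mem_space[OF pq(2)]] by simp
qed

lemma split_point_on_segment:
  assumes p: "p \<in> F"
  shows "split_point x F \<in> segment x p" and "d x (split_point x F) = split_depth x F"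
proof -
  define p0 where "p0 = (SOME p. p \<in> F)"
  have p0: "p0 \<in> F"
    unfolding p0_def using p by (rule someI)
  have "split_depth x F \<le> gromov_product x p0 p"
    using split_depth_le[OF p0 p] split_depth_less dist_center[OF p] mem_space[OF p]
    by (cases "p0 = p") (auto simp: gromov_product_def)
  then have "split_point x F = geodesic x p (split_depth x F)"
    using geodesic_eq_of_le_gromov_product[OF center mem_space[OF p0] mem_space[OF p]]
      split_depth_nonneg by (simp add: split_point_def p0_def)
  moreover have "split_depth x F \<in> {0..d x p}"
    using split_depth_nonneg split_depth_less dist_center[OF p] by simp
  ultimately show "split_point x F \<in> segment x p" "d x (split_point x F) = split_depth x F"
    using geodesic_in_segment[OF center mem_space[OF p]] dist_start_geodesic[OF center mem_space[OF p]]
    by simp_all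
qed

lemma split_point_in_space: "split_point x F \<in> M"
  and dist_split_point: "d x (split_point x F) = split_depth x F"
proof -
  obtain p where p: "p \<in> F"
    by (rule split_depth_attained)
  then show "split_point x F \<in> M" "d x (split_point x F) = split_depth x F"
    using split_point_on_segment[OF p] segment_subset_space[OF center mem_space[OF p]] by auto
qed

lemma split_point_ne: "p \<in> F \<Longrightarrow> p \<noteq> split_point x F"
  using dist_split_point dist_center split_depth_less by fastforce

lemma split_point_not_mem_segment:
  "p \<in> M \<Longrightarrow> q \<in> M \<Longrightarrow> split_depth x F < gromov_product x p q \<Longrightarrow> split_point x F \<notin> segment p q"
  using gromov_product_le_dist_of_mem_segment[OF center] dist_split_point by fastforce

lemma split_point_mem_segment:
  "p \<in> F \<Longrightarrow> q \<in> M \<Longrightarrow> gromov_product x q p \<le> split_depth x F \<Longrightarrow> split_point x F \<in> segment q p"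
  using mem_segment_of_gromov_product_le[OF center mem_space _ split_point_on_segment(1)]
    dist_split_point by simp

lemma branch_at_split_point_eq_iff:
  assumes p: "p \<in> F" and q: "q \<in> F"
  shows "branch_at (split_point x F) p = branch_at (split_point x F) q \<longleftrightarrow>
    split_depth x F < gromov_product x p q"
  using branch_at_eq_iff[OF split_point_in_space mem_space[OF p] split_point_ne[OF p]
      mem_space[OF q] split_point_ne[OF q]]
    split_point_not_mem_segment[OF mem_space[OF p] mem_space[OF q]]
    split_point_mem_segment[OF q mem_space[OF p]] by linarith

lemma extension_same_branch:
  assumes p: "p \<in> F" and z: "z \<in> M" "p \<in> segment x z" "s + \<rho> \<le> d x z"
  shows "\<rho> < d z (split_point x F)"
    and "branch_at (split_point x F) z = branch_at (split_point x F) p"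
proof -
  have "d x z \<le> split_depth x F + d (split_point x F) z"
    using triangle[OF center split_point_in_space z(1)] split_point_on_segment(2)[OF p] by simp
  then show "\<rho> < d z (split_point x F)"
    using z(3) split_depth_less by (simp add: commute)
  have "z \<noteq> split_point x F"
    using dist_le_of_mem_segment[OF center z(1,2)] dist_center[OF p] dist_split_point
      split_depth_less by auto
  moreover have "gromov_product x z p = s"
    using gromov_product_eq_of_mem_segment[OF center z(1,2)] dist_center[OF p]
    by (simp add: gromov_product_commute)
  ultimately show "branch_at (split_point x F) z = branch_at (split_point x F) p"
    using branch_at_eq_iff[OF split_point_in_space z(1) _ mem_space[OF p] split_point_ne[OF p]]
      split_point_not_mem_segment[OF z(1) mem_space[OF p]] split_depth_less by simp
qed

lemma split_point_branch_point:
  assumes fin: "finite (branches m (split_point x F))" and \<rho>: "0 \<le> \<rho>"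
    and witness: "third_branch_witness x \<rho> F w"
  shows "branch_point m (split_point x F) \<and> \<rho> \<le> Hbr m (split_point x F)"
proof -
  let ?c = "split_point x F"
  obtain p1 p2 where pp: "p1 \<in> F" "p2 \<in> F" "p1 \<noteq> p2" "gromov_product x p1 p2 = split_depth x F"
    by (rule split_depth_attained)
  obtain z1 where z1: "z1 \<in> M" "p1 \<in> segment x z1" "s + \<rho> \<le> d x z1"
    using extends[OF pp(1)] by blast
  obtain z2 where z2: "z2 \<in> M" "p2 \<in> segment x z2" "s + \<rho> \<le> d x z2"
    using extends[OF pp(2)] by blast
  have w: "w \<in> M" "\<rho> < d w ?c" "?c \<in> segment w p1" "?c \<in> segment w p2"
    using witness pp by (auto simp: third_branch_witness_def)
  then have "w \<noteq> ?c"
    using \<rho> by auto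
  then have "branch_at ?c w \<noteq> branch_at ?c p1" "branch_at ?c w \<noteq> branch_at ?c p2"
    using branch_at_eq_iff[OF split_point_in_space w(1)] mem_space pp split_point_ne w(3,4)
    by auto
  moreover have "branch_at ?c p1 \<noteq> branch_at ?c p2"
    using branch_at_split_point_eq_iff[OF pp(1,2)] pp(4) by simp
  ultimately show ?thesis
    using branch_point_of_three_branches[OF fin split_point_in_space w(1) z1(1) z2(1)] \<rho> w(2)
      extension_same_branch[OF pp(1) z1] extension_same_branch[OF pp(2) z2] by (simp add: commute)
qed

definition split_fiber :: "'a \<Rightarrow> 'a set" where
  "split_fiber p = {q \<in> F. branch_at (split_point x F) q = branch_at (split_point x F) p}"

context
  fixes p
  assumes p: "p \<in> F" and two_le_card_fiber: "2 \<le> card (split_fiber p)"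
begin

interpretation fiber: far_sphere_set m x \<rho> s "split_fiber p"
  using center finite subset two_le_card_fiber
  by unfold_locales (auto simp: split_fiber_def)

lemma far_sphere_set_split_fiber: "far_sphere_set m x \<rho> s (split_fiber p)"
  by (rule fiber.far_sphere_set_axioms)

lemma split_depth_less_split_fiber: "split_depth x F < split_depth x (split_fiber p)"
proof -
  obtain q q' where q: "q \<in> split_fiber p" "q' \<in> split_fiber p"
    "gromov_product x q q' = split_depth x (split_fiber p)"
    by (rule fiber.split_depth_attained)
  then show ?thesis
    using branch_at_split_point_eq_iff[of q q'] by (auto simp: split_fiber_def)
qed

lemma dist_split_point_split_fiber:
  "d (split_point x F) (split_point x (split_fiber p)) = split_depth x (split_fiber p) - split_depth x F"
proof -
  obtain q where q: "q \<in> split_fiber p"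
    by (rule fiber.split_depth_attained)
  then have "q \<in> F"
    by (simp add: split_fiber_def)
  then show ?thesis
    using dist_of_mem_segment[OF center mem_space split_point_on_segment(1)
        fiber.split_point_on_segment(1)[OF q]] dist_split_point fiber.dist_split_point split_depth_less_split_fiber by simp
qed

lemma third_branch_witness_split_fiber: "\<exists>z. third_branch_witness x \<rho> (split_fiber p) z"
proof -
  let ?c = "split_point x F"
  obtain p1 p2 where pp: "p1 \<in> F" "p2 \<in> F" "gromov_product x p1 p2 = split_depth x F"
    by (rule split_depth_attained)
  then have "branch_at ?c p1 \<noteq> branch_at ?c p2"
    using branch_at_split_point_eq_iff by simp
  then obtain r where r: "r \<in> F" "branch_at ?c r \<noteq> branch_at ?c p"
    using pp by metis
  obtain z where z: "z \<in> M" "r \<in> segment x z" "s + \<rho> \<le> d x z"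
    using extends[OF r(1)] by blast
  have "gromov_product x z a \<le> split_depth x F" if a: "a \<in> split_fiber p" for a
  proof (rule ccontr)
    assume "\<not> ?thesis"
    moreover have "gromov_product x r z = s"
      using gromov_product_eq_of_mem_segment[OF center z(1,2)] dist_center[OF r(1)] by simp
    moreover have "a \<in> F"
      using a by (simp add: split_fiber_def)
    ultimately have "split_depth x F < gromov_product x r a"
      using gromov_product_ultrametric[OF center mem_space[OF r(1)] z(1) mem_space, of a]
        split_depth_less by linarith
    then show False
      using branch_at_split_point_eq_iff[OF r(1) \<open>a \<in> F\<close>] a r(2) by (simp add: split_fiber_def)
  qed
  then have "split_point x (split_fiber p) \<in> segment z a" if "a \<in> split_fiber p" for a
    using fiber.split_point_mem_segment[OF that z(1)] split_depth_less_split_fiber that by fastforce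
  moreover have "\<rho> < d z (split_point x (split_fiber p))"
    using triangle[OF center fiber.split_point_in_space z(1)] fiber.dist_split_point
      fiber.split_depth_less z(3) by (simp add: commute)
  ultimately show ?thesis
    using z(1) by (auto simp: third_branch_witness_def)
qed

end

lemma card_le_mult_split_fiber:
  assumes val: "valence_le m N" and K: "\<And>p. p \<in> F \<Longrightarrow> card (split_fiber p) \<le> K"
  shows "card F \<le> N * K"
proof -
  let ?c = "split_point x F"
  have "card F \<le> card (branch_at ?c ` F) * K"
    using K by (intro card_le_card_image_mult[OF finite]) (simp add: split_fiber_def)
  also have "card (branch_at ?c ` F) \<le> card (branches m ?c)"
    using val split_point_in_space branch_at_in_branches mem_space split_point_ne
    by (intro card_mono) (auto simp: valence_le_def)
  also have "\<dots> \<le> N"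
    using val split_point_in_space by (simp add: valence_le_def)
  finally show ?thesis
    by (simp add: mult_right_mono)
qed

lemma split_depth_split_fiber_ge:
  assumes val: "valence_le m N" and ubs: "uniform_branch_separation m C" and C: "0 < C"
    and \<rho>: "0 \<le> \<rho>" and w: "third_branch_witness x \<rho> F w"
    and p: "p \<in> F" and two: "2 \<le> card (split_fiber p)"
  shows "split_depth x F + \<rho> / C \<le> split_depth x (split_fiber p)"
proof -
  interpret fiber: far_sphere_set m x \<rho> s "split_fiber p"
    by (rule far_sphere_set_split_fiber[OF p two])
  let ?c = "split_point x F" and ?c' = "split_point x (split_fiber p)"
  obtain z where z: "third_branch_witness x \<rho> (split_fiber p) z"
    using third_branch_witness_split_fiber[OF p two] by blast
  have "branch_point m ?c \<and> \<rho> \<le> Hbr m ?c"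
    using split_point_branch_point[OF _ \<rho> w] val split_point_in_space by (simp add: valence_le_def)
  moreover have "branch_point m ?c' \<and> \<rho> \<le> Hbr m ?c'"
    using fiber.split_point_branch_point[OF _ \<rho> z] val fiber.split_point_in_space
    by (simp add: valence_le_def)
  moreover have "?c \<noteq> ?c'"
    using dist_split_point_split_fiber[OF p two] split_depth_less_split_fiber[OF p two]
      split_point_in_space by auto
  ultimately have "\<rho> / C \<le> d ?c ?c'"
    using ubs C unfolding uniform_branch_separation_def
    by (smt (verit, best) divide_right_mono min_def)
  then show ?thesis
    using dist_split_point_split_fiber[OF p two] by simp
qed

lemma card_le_power_by_split_fibers:
  assumes val: "valence_le m N" and N: "1 \<le> N"
    and fibers: "\<And>p z. p \<in> F \<Longrightarrow> 2 \<le> card (split_fiber p) \<Longrightarrow>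
      third_branch_witness x \<rho> (split_fiber p) z \<Longrightarrow> card (split_fiber p) \<le> N ^ k"
  shows "card F \<le> N ^ Suc k"
proof -
  have "card (split_fiber p) \<le> N ^ k" if p: "p \<in> F" for p
  proof (cases "card (split_fiber p) \<le> 1")
    case True
    then show ?thesis
      using N by (meson le_trans one_le_power)
  next
    case False
    then show ?thesis
      using fibers[OF p] third_branch_witness_split_fiber[OF p] by force
  qed
  then show ?thesis
    using card_le_mult_split_fiber[OF val] by simp
qed

end

section \<open>Counting sphere points and doubling\<close>

context geodesic_metric_tree
begin

context
  fixes N :: nat and C :: real
  assumes val: "valence_le m N" and ubs: "uniform_branch_separation m C"
    and C: "0 < C" and N: "1 \<le> N"
begin

lemma card_le_of_third_branch_witness:
  assumes x: "x \<in> M" and \<rho>: "0 \<le> \<rho>"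
  shows "finite F \<Longrightarrow> F \<subseteq> far_sphere x \<rho> s \<Longrightarrow> third_branch_witness x \<rho> F w \<Longrightarrow>
    s - split_depth x F \<le> real k * (\<rho> / C) \<Longrightarrow> card F \<le> N ^ k"
proof (induction k arbitrary: F w)
  case 0
  show ?case
  proof (cases "card F \<le> 1")
    case False
    then interpret far_sphere_set m x \<rho> s F
      using x "0.prems" by unfold_locales auto
    show ?thesis
      using "0.prems"(4) split_depth_less by simp
  qed simp
next
  case (Suc k)
  show ?case
  proof (cases "card F \<le> 1")
    case False
    then interpret far_sphere_set m x \<rho> s F
      using x Suc.prems by unfold_locales auto
    show ?thesis
    proof (rule card_le_power_by_split_fibers[OF val N])
      fix p z assume p: "p \<in> F" and two: "2 \<le> card (split_fiber p)"
        and z: "third_branch_witness x \<rho> (split_fiber p) z"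
      interpret fiber: far_sphere_set m x \<rho> s "split_fiber p"
        by (rule far_sphere_set_split_fiber[OF p two])
      have "s - split_depth x (split_fiber p) \<le> real k * (\<rho> / C)"
        using split_depth_split_fiber_ge[OF val ubs C \<rho> Suc.prems(3) p two] Suc.prems(4)
        by (simp add: algebra_simps)
      then show "card (split_fiber p) \<le> N ^ k"
        using Suc.IH[OF fiber.finite fiber.subset z] by blast
    qed
  qed (use N in \<open>meson le_trans one_le_power\<close>)
qed

lemma card_le_of_subset_far_sphere:
  assumes x: "x \<in> M" and \<rho>: "0 \<le> \<rho>" and s: "s \<le> real k * (\<rho> / C)"
    and F: "finite F" "F \<subseteq> far_sphere x \<rho> s"
  shows "card F \<le> N ^ Suc k"
proof (cases "card F \<le> 1")
  case False
  then interpret far_sphere_set m x \<rho> s F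
    using x F by unfold_locales auto
  show ?thesis
  proof (rule card_le_power_by_split_fibers[OF val N])
    fix p z assume p: "p \<in> F" and two: "2 \<le> card (split_fiber p)"
      and z: "third_branch_witness x \<rho> (split_fiber p) z"
    interpret fiber: far_sphere_set m x \<rho> s "split_fiber p"
      by (rule far_sphere_set_split_fiber[OF p two])
    show "card (split_fiber p) \<le> N ^ k"
      using card_le_of_third_branch_witness[OF x \<rho> fiber.finite fiber.subset z] s
        fiber.split_depth_nonneg by simp
  qed
qed (use N in \<open>meson le_trans one_le_power\<close>)

lemma far_sphere_finite_card_le:
  assumes "x \<in> M" "0 \<le> \<rho>" "s \<le> real k * (\<rho> / C)"
  shows "finite (far_sphere x \<rho> s) \<and> card (far_sphere x \<rho> s) \<le> N ^ Suc k"
  using card_le_of_subset_far_sphere[OF assms] by (intro finite_if_finite_subsets_card_bdd) blast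

end

lemma geodesic_mem_far_sphere:
  assumes x: "x \<in> M" and z: "z \<in> M" and t: "0 \<le> t" "t + \<rho> \<le> d x z" and \<rho>: "0 \<le> \<rho>"
  shows "geodesic x z t \<in> far_sphere x \<rho> t" and "d (geodesic x z t) z = d x z - t"
proof -
  have t_range: "t \<in> {0..d x z}"
    using t \<rho> by simp
  then show "geodesic x z t \<in> far_sphere x \<rho> t"
    using geodesic_in_space[OF x z] dist_start_geodesic[OF x z] geodesic_in_segment[OF x z] z t(2)
    by (auto simp: far_sphere_def)
  show "d (geodesic x z t) z = d x z - t"
    using dist_geodesic_end[OF x z t_range] .
qed

lemma mball_subset_far_sphere_balls:
  assumes x: "x \<in> M" and \<rho>: "0 < \<rho>"
  shows "mball_of m x (4 * \<rho>) \<subseteq>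
    (\<Union>c \<in> insert x (far_sphere x \<rho> \<rho> \<union> far_sphere x \<rho> (2 * \<rho>)). mball_of m c (2 * \<rho>))"
proof
  fix z assume "z \<in> mball_of m x (4 * \<rho>)"
  then have z: "z \<in> M" "d x z < 4 * \<rho>"
    by auto
  consider "d x z < 2 * \<rho>" | "2 * \<rho> \<le> d x z" "d x z < 3 * \<rho>" | "3 * \<rho> \<le> d x z"
    by linarith
  then show "z \<in> (\<Union>c \<in> insert x (far_sphere x \<rho> \<rho> \<union> far_sphere x \<rho> (2 * \<rho>)). mball_of m c (2 * \<rho>))"
  proof cases
    case 1
    then show ?thesis
      using x z by auto
  next
    case 2
    then show ?thesis
      using geodesic_mem_far_sphere[OF x z(1), of \<rho> \<rho>] geodesic_in_space[OF x z(1), of \<rho>] \<rho> z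
      by force
  next
    case 3
    then show ?thesis
      using geodesic_mem_far_sphere[OF x z(1), of "2 * \<rho>" \<rho>] geodesic_in_space[OF x z(1), of "2 * \<rho>"]
        \<rho> z by force
  qed
qed

lemma doubling_of_uniform_branch_separation:
  assumes val: "valence_le m N" and ubs: "uniform_branch_separation m C"
    and C: "0 < C" and N: "1 \<le> N" and k: "2 * C \<le> real k"
  shows "doubling m (1 + 2 * real (N ^ Suc k))"
  unfolding doubling_def
proof (intro ballI allI impI)
  fix x r assume x: "x \<in> M" and r: "(0::real) < r"
  define \<rho> where "\<rho> = r / 4"
  have \<rho>: "0 < \<rho>"
    using r by (simp add: \<rho>_def)
  have depth2: "2 * \<rho> \<le> real k * (\<rho> / C)"
    using mult_right_mono[OF k, of "\<rho> / C"] C \<rho> by simp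
  then have depth1: "\<rho> \<le> real k * (\<rho> / C)"
    using \<rho> by linarith
  define F where "F = insert x (far_sphere x \<rho> \<rho> \<union> far_sphere x \<rho> (2 * \<rho>))"
  note sphere1 = far_sphere_finite_card_le[OF val ubs C N x less_imp_le[OF \<rho>] depth1]
  note sphere2 = far_sphere_finite_card_le[OF val ubs C N x less_imp_le[OF \<rho>] depth2]
  have "card F \<le> Suc (card (far_sphere x \<rho> \<rho> \<union> far_sphere x \<rho> (2 * \<rho>)))"
    unfolding F_def using sphere1 sphere2 by (simp add: card_insert_if)
  also have "\<dots> \<le> Suc (card (far_sphere x \<rho> \<rho>) + card (far_sphere x \<rho> (2 * \<rho>)))"
    using card_Un_le by simp
  finally have "real (card F) \<le> 1 + 2 * real (N ^ Suc k)"
    using sphere1 sphere2 by linarith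
  moreover have "finite F" "F \<subseteq> M"
    using sphere1 sphere2 x by (auto simp: F_def far_sphere_def)
  moreover have "mball_of m x r \<subseteq> (\<Union>c\<in>F. mball_of m c (r / 2))"
    using mball_subset_far_sphere_balls[OF x \<rho>] by (simp add: F_def \<rho>_def)
  ultimately show "\<exists>F. finite F \<and> F \<subseteq> M \<and> real (card F) \<le> 1 + 2 * real (N ^ Suc k) \<and>
      mball_of m x r \<subseteq> (\<Union>c\<in>F. mball_of m c (r / 2))"
    by blast
qed

end

theorem lemma2p6:
  fixes N :: nat and C :: real
  assumes "N \<ge> 2" and "C \<ge> 1"
  shows "\<exists>D>0. \<forall>m :: 'a metric.
           metric_tree m \<and> geodesic_space m \<and> valence_le m N \<and>
           uniform_branch_separation m C \<longrightarrow> doubling m D"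
proof (intro exI conjI allI impI)
  define k where "k = nat \<lceil>2 * C\<rceil>"
  have k: "2 * C \<le> real k"
    unfolding k_def by linarith
  show "0 < 1 + 2 * real (N ^ Suc k)"
    by (simp add: add_pos_nonneg)
  fix m :: "'a metric"
  assume m: "metric_tree m \<and> geodesic_space m \<and> valence_le m N \<and> uniform_branch_separation m C"
  then have "geodesic_metric_tree m"
    by (simp add: geodesic_metric_tree_def)
  then show "doubling m (1 + 2 * real (N ^ Suc k))"
    by (rule geodesic_metric_tree.doubling_of_uniform_branch_separation) (use m assms k in auto)
qed

end
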